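(* Assume that the weak Poincaré inequality $$\mu(f^2)\le\beta(r)\,\mathcal E(f,f)+r\|f\|_\infty^2,\qquad r>0,\ f\in\mathcal D(\mathcal E),\ \mu(f)=0,$$ holds for some decreasing function $\beta:(0,\infty)\to(0,\infty)$. If for every $\varepsilon>0$ $$\inf_{n,k\ge1}e^{\tilde Z_n(V)}\beta\big(\varepsilon e^{-\tilde Z_n(V)}\big)\big(\tilde\eta_{n,k}+\tilde\gamma_k+\mu(\rho>n-k)\big)=0,$$ then $$\mu_V(f^2)\le\beta_V(r)\,\mathcal E_V(f,f)+r\|f\|_\infty^2,\qquad r>0,\ f\in\mathcal D(\mathcal E_V),\ \mu_V(f)=0,$$ holds with $$\beta_V(r):=\inf\Big\{2\beta\Big(\frac r8e^{-\tilde Z_n(V)}\Big)e^{\tilde K_{n,k}(V)}:\ n,k\ge1,\ 6\mu_V(\rho>n)+2e^{\tilde Z_n(V)}\beta\Big(\frac r8e^{-\tilde Z_n(V)}\Big)\big(4\tilde\eta_{n,k}+\tilde\gamma_k+4\lambda\mu(\rho>n-k)\big)\le\frac r2\Big\},$$ and $\beta_V(r)<\infty$ for all $r>0$.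
   Context: Setting: $(E,d)$ is a Polish space with Borel $\sigma$-field and a probability measure $\mu$. Let $q:E\times E\to[0,\infty)$ be measurable with $q(x,x)=0$ for all $x$, and $\lambda:=\sup_{x\in E}\int_E(1\wedge d(x,y)^2)q(x,y)\,\mu(\mathrm dy)<\infty.$ For bounded measurable $f,g$ set $\Gamma(f,g)(x)=\int_E(f(x)-f(y))(g(x)-g(y))q(x,y)\mu(\mathrm dy)$; $\mathcal A$ is the set of bounded measurable $f$ with $\Gamma(f,f)$ bounded, assumed dense in $L^2(\mu)$. $(\mathcal E,\mathcal D(\mathcal E))$ is the closure in $L^2(\mu)$ of $\mathcal E(f,g)=\mu(\Gamma(f,g))$ on $\mathcal A$. Fix $o\in E$, $\rho(x)=d(o,x)$. $V$ is a measurable function bounded on each set $\{\rho\le r\}$, $r>0$, with $\mu(e^V)=1$; $\mu_V(\mathrm dx)=e^{V(x)}\mu(\mathrm dx)$, and $(\mathcal E_V,\mathcal D(\mathcal E_V))$ is the closure in $L^2(\mu_V)$ of $\mathcal E_V(f,g)=\mu_V(\Gamma(f,g))$ on $\mathcal A$. $\|f\|_\infty$ is the uniform norm. Notation (for $n,k\ge1$): $\tilde K_{n,k}(V)=\sup_{\rho\le n}V-\inf_{\rho\le n+k+1}V$; $\tilde Z_n(V)=\sup_{\rho\le n}V$; $\tilde\eta_{n,k}=\iint_{\{\rho(x)>n+k+1,\ \rho(y)\le n+1\}}q(x,y)\mu(\mathrm dy)\mu(\mathrm dx)$; $\tilde\gamma_k=\iint_{\{d(x,y)>k\}}q(x,y)\mu(\mathrm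 dy)\mu(\mathrm dx)$. *)

theory Defs
  imports "HOL-Probability.Probability"
begin

definition Gam :: "'a measure \<Rightarrow> ('a \<Rightarrow> 'a \<Rightarrow> real) \<Rightarrow> ('a \<Rightarrow> real) \<Rightarrow> 'a \<Rightarrow> ennreal" where
  "Gam M q f x = (\<integral>\<^sup>+ y. ennreal ((f x - f y)^2 * q x y) \<partial>M)"

definition coreA :: "'a measure \<Rightarrow> ('a \<Rightarrow> 'a \<Rightarrow> real) \<Rightarrow> ('a \<Rightarrow> real) set" where
  "coreA M q = {f \<in> borel_measurable M. bounded (range f) \<and> (\<exists>C::real. \<forall>x. Gam M q f x \<le> ennreal C)}"

definition energy :: "'a measure \<Rightarrow> ('a \<Rightarrow> 'a \<Rightarrow> real) \<Rightarrow> 'a measure \<Rightarrow> ('a \<Rightarrow> real) \<Rightarrow> real" where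
  "energy M q N f = enn2real (\<integral>\<^sup>+ x. Gam M q f x \<partial>N)"

text \<open>fs is an approximating sequence for f in the closure in L^2(N) of the form on the core.\<close>
definition approx_seq :: "'a measure \<Rightarrow> ('a \<Rightarrow> 'a \<Rightarrow> real) \<Rightarrow> 'a measure \<Rightarrow> ('a \<Rightarrow> real) \<Rightarrow> (nat \<Rightarrow> 'a \<Rightarrow> real) \<Rightarrow> bool" where
  "approx_seq M q N f fs \<longleftrightarrow>
     (\<forall>n. fs n \<in> coreA M q) \<and> f \<in> borel_measurable N \<and> integrable N (\<lambda>x. (f x)^2) \<and>
     (\<lambda>n. \<integral>x. (fs n x - f x)^2 \<partial>N) \<longlonglongrightarrow> 0 \<and>
     (\<forall>e>0. \<exists>N0. \<forall>m\<ge>N0. \<forall>n\<ge>N0. energy M q N (\<lambda>x. fs m x - fs n x) < e)"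

definition form_dom :: "'a measure \<Rightarrow> ('a \<Rightarrow> 'a \<Rightarrow> real) \<Rightarrow> 'a measure \<Rightarrow> ('a \<Rightarrow> real) set" where
  "form_dom M q N = {f. \<exists>fs. approx_seq M q N f fs}"

text \<open>Value of the closed form: limit of energies along approximating sequences
  (independent of the sequence by closability).\<close>
definition form_val :: "'a measure \<Rightarrow> ('a \<Rightarrow> 'a \<Rightarrow> real) \<Rightarrow> 'a measure \<Rightarrow> ('a \<Rightarrow> real) \<Rightarrow> real" where
  "form_val M q N f = Inf {e. \<exists>fs. approx_seq M q N f fs \<and> (\<lambda>n. energy M q N (fs n)) \<longlonglongrightarrow> e}"

definition sup_norm :: "('a \<Rightarrow> real) \<Rightarrow> real" where
  "sup_norm f = (SUP x. \<bar>f x\<bar>)"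

text \<open>Weak Poincare inequality for the closed form in L^2(N) with rate function beta.
  Unbounded f are omitted since then the uniform norm is infinite and the inequality trivial.\<close>
definition weak_poincare :: "'a measure \<Rightarrow> ('a \<Rightarrow> 'a \<Rightarrow> real) \<Rightarrow> 'a measure \<Rightarrow> (real \<Rightarrow> real) \<Rightarrow> bool" where
  "weak_poincare M q N \<beta> \<longleftrightarrow>
     (\<forall>r>0. \<forall>f\<in>form_dom M q N. bounded (range f) \<longrightarrow> (\<integral>x. f x \<partial>N) = 0 \<longrightarrow>
        (\<integral>x. (f x)^2 \<partial>N) \<le> \<beta> r * form_val M q N f + r * (sup_norm f)^2)"

definition lam :: "'a::metric_space measure \<Rightarrow> ('a \<Rightarrow> 'a \<Rightarrow> real) \<Rightarrow> ennreal" where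
  "lam M q = (SUP x. \<integral>\<^sup>+ y. ennreal (min 1 ((dist x y)^2) * q x y) \<partial>M)"

definition Zt :: "'a::metric_space \<Rightarrow> ('a \<Rightarrow> real) \<Rightarrow> nat \<Rightarrow> real" where
  "Zt x0 V n = (SUP x\<in>{x. dist x0 x \<le> real n}. V x)"

definition Kt :: "'a::metric_space \<Rightarrow> ('a \<Rightarrow> real) \<Rightarrow> nat \<Rightarrow> nat \<Rightarrow> real" where
  "Kt x0 V n k = Zt x0 V n - (INF x\<in>{x. dist x0 x \<le> real n + real k + 1}. V x)"

definition etat :: "'a::metric_space measure \<Rightarrow> ('a \<Rightarrow> 'a \<Rightarrow> real) \<Rightarrow> 'a \<Rightarrow> nat \<Rightarrow> nat \<Rightarrow> ennreal" where
  "etat M q x0 n k = (\<integral>\<^sup>+ x. \<integral>\<^sup>+ y.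
      (if dist x0 x > real n + real k + 1 \<and> dist x0 y \<le> real n + 1 then ennreal (q x y) else 0) \<partial>M \<partial>M)"

definition gammat :: "'a::metric_space measure \<Rightarrow> ('a \<Rightarrow> 'a \<Rightarrow> real) \<Rightarrow> nat \<Rightarrow> ennreal" where
  "gammat M q k = (\<integral>\<^sup>+ x. \<integral>\<^sup>+ y. (if dist x y > real k then ennreal (q x y) else 0) \<partial>M \<partial>M)"

definition betaV_set :: "'a::metric_space measure \<Rightarrow> ('a \<Rightarrow> 'a \<Rightarrow> real) \<Rightarrow> 'a \<Rightarrow> ('a \<Rightarrow> real)
    \<Rightarrow> (real \<Rightarrow> real) \<Rightarrow> real \<Rightarrow> real set" where
  "betaV_set M q x0 V \<beta> r =
     {2 * \<beta> (r / 8 * exp (- Zt x0 V n)) * exp (Kt x0 V n k) | n k. n \<ge> 1 \<and> k \<ge> 1 \<and>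
        ennreal (6 * measure (density M (\<lambda>x. ennreal (exp (V x)))) {x. dist x0 x > real n})
        + ennreal (2 * exp (Zt x0 V n) * \<beta> (r / 8 * exp (- Zt x0 V n)))
          * (4 * etat M q x0 n k + gammat M q k
             + 4 * lam M q * ennreal (measure M {x. dist x0 x > real n - real k}))
        \<le> ennreal (r / 2)}"

definition betaV :: "'a::metric_space measure \<Rightarrow> ('a \<Rightarrow> 'a \<Rightarrow> real) \<Rightarrow> 'a \<Rightarrow> ('a \<Rightarrow> real)
    \<Rightarrow> (real \<Rightarrow> real) \<Rightarrow> real \<Rightarrow> real" where
  "betaV M q x0 V \<beta> r = Inf (betaV_set M q x0 V \<beta> r)"

end

theory Submission
  imports Defs
begin

text \<open>Write \<open>MV = exp V \<cdot> M\<close>. For a core function h and an admissible pair (n, k), let \<chi> be the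
  Lipschitz cutoff equal to 1 on the ball of radius n around x0 and vanishing outside radius n + k,
  and let m be the M-mean of h \<chi>. Then the MV-variance of h is at most
  \<open>exp (Zt n) \<cdot> M((h \<chi> - m)\<^sup>2) + 4 \<parallel>h\<parallel>\<^sup>2 MV(\<rho> > n)\<close>; the weak Poincare inequality for M bounds
  \<open>M((h \<chi> - m)\<^sup>2)\<close>, and the energy of h \<chi> is at most \<open>2 exp (- inf V)\<close> times the MV-energy of h plus
  \<open>\<parallel>h\<parallel>\<^sup>2\<close> times the energy of \<chi>, which is at most \<open>gammat k + \<lambda> M(\<rho> > n - k)\<close>. Admissibility absorbs
  all error terms into \<open>r \<parallel>h\<parallel>\<^sup>2\<close>. A general f is reached by clipping an approximating core sequence at
  the uniform norm of f and passing to the limit.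

  Admissible pairs exist because \<open>exp (Zt n) \<beta> (\<epsilon> exp (- Zt n))\<close> increases with n: a pair making the
  product in the hypothesis small therefore makes \<open>M(\<rho> > n - k)\<close> small, and then also \<open>MV(\<rho> > n)\<close>,
  after cutting V at a level t with \<open>MV(V > t)\<close> small.\<close>

section \<open>Cutoff functions, clipping and elementary inequalities\<close>

definition cutoff :: "'a::metric_space \<Rightarrow> nat \<Rightarrow> nat \<Rightarrow> 'a \<Rightarrow> real" where
  "cutoff x0 n k x = min 1 (max 0 ((real n + real k - dist x0 x) / real k))"

lemma cutoff_nonneg: "0 \<le> cutoff x0 n k x"
  and cutoff_le_one: "cutoff x0 n k x \<le> 1"
  unfolding cutoff_def by auto

lemma cutoff_eq_one: "k \<ge> 1 \<Longrightarrow> dist x0 x \<le> real n \<Longrightarrow> cutoff x0 n k x = 1"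
  unfolding cutoff_def by (auto simp: field_simps)

lemma cutoff_eq_zero: "k \<ge> 1 \<Longrightarrow> dist x0 x \<ge> real n + real k \<Longrightarrow> cutoff x0 n k x = 0"
  unfolding cutoff_def by (auto simp: field_simps)

lemma abs_mult_cutoff_le:
  assumes "\<bar>a\<bar> \<le> c"
  shows "\<bar>a * cutoff x0 n k x\<bar> \<le> c"
proof -
  have "\<bar>a\<bar> * cutoff x0 n k x \<le> c * 1"
    using assms cutoff_nonneg cutoff_le_one by (intro mult_mono) (auto intro: order_trans[OF abs_ge_zero])
  then show ?thesis using cutoff_nonneg[of x0 n k x] by (simp add: abs_mult)
qed

lemma abs_cutoff_diff_le:
  assumes "k \<ge> 1"
  shows "\<bar>cutoff x0 n k x - cutoff x0 n k y\<bar> \<le> dist x y / real k"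
proof -
  have "(real n + real k - dist x0 x) / real k - (real n + real k - dist x0 y) / real k
        = (dist x0 y - dist x0 x) / real k"
    using assms by (simp add: field_simps)
  then have "\<bar>(real n + real k - dist x0 x) / real k - (real n + real k - dist x0 y) / real k\<bar>
        = \<bar>dist x0 y - dist x0 x\<bar> / real k"
    by (simp add: abs_divide)
  also have "\<dots> \<le> dist x y / real k"
    using dist_triangle[of x0 y x] dist_triangle[of x0 x y] dist_commute[of x y]
    by (intro divide_right_mono) auto
  finally show ?thesis
    unfolding cutoff_def by (simp add: abs_le_iff) linarith
qed

lemma cutoff_diff_square_le:
  assumes "k \<ge> 1"
  shows "(cutoff x0 n k x - cutoff x0 n k y)^2 \<le> min 1 ((dist x y)^2)"
proof -
  let ?d = "cutoff x0 n k x - cutoff x0 n k y"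
  have "\<bar>?d\<bar> \<le> 1"
    using cutoff_nonneg[of x0 n k x] cutoff_le_one[of x0 n k x]
      cutoff_nonneg[of x0 n k y] cutoff_le_one[of x0 n k y] by (auto simp: abs_le_iff)
  then have "?d^2 \<le> 1" by (simp add: abs_square_le_1)
  have "\<bar>?d\<bar> \<le> dist x y / real k" by (rule abs_cutoff_diff_le[OF assms])
  also have "\<dots> \<le> dist x y" using assms by (simp add: divide_le_eq mult_le_cancel_left1)
  finally have "?d^2 \<le> (dist x y)^2" by (metis abs_ge_zero power2_abs power_mono)
  with \<open>?d^2 \<le> 1\<close> show ?thesis by simp
qed

text \<open>A jump of the cutoff is either long (longer than k) or starts outside the ball of radius n - k.\<close>
lemma cutoff_diff_square_mult_le:
  assumes "k \<ge> 1" and "Q \<ge> 0"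
  shows "(cutoff x0 n k x - cutoff x0 n k y)^2 * Q \<le>
     (if dist x y > real k then Q else 0) +
     (if dist x0 x > real n - real k then min 1 ((dist x y)^2) * Q else 0)"
proof -
  have sq: "(cutoff x0 n k x - cutoff x0 n k y)^2 \<le> min 1 ((dist x y)^2)"
    by (rule cutoff_diff_square_le[OF assms(1)])
  consider "dist x y > real k" | "dist x y \<le> real k" "dist x0 x > real n - real k"
    | "dist x y \<le> real k" "dist x0 x \<le> real n - real k"
    by linarith
  then show ?thesis
  proof cases
    case 1
    have "(cutoff x0 n k x - cutoff x0 n k y)^2 * Q \<le> 1 * Q"
      using sq assms(2) by (intro mult_right_mono) auto
    moreover have "0 \<le> min 1 ((dist x y)^2) * Q" using assms(2) by simp
    ultimately show ?thesis using 1 by auto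
  next
    case 2
    then show ?thesis using sq assms(2) by (auto intro: mult_right_mono)
  next
    case 3
    moreover have "dist x0 y \<le> dist x0 x + dist x y" by (rule dist_triangle)
    ultimately have "cutoff x0 n k x = 1" "cutoff x0 n k y = 1"
      using assms(1) by (auto intro!: cutoff_eq_one)
    then show ?thesis using 3 by simp
  qed
qed

definition clip :: "real \<Rightarrow> real \<Rightarrow> real" where
  "clip c t = max (- c) (min c t)"

lemma abs_clip_le: "c \<ge> 0 \<Longrightarrow> \<bar>clip c t\<bar> \<le> c"
  and clip_eq_self: "\<bar>t\<bar> \<le> c \<Longrightarrow> clip c t = t"
  and abs_clip_diff_le: "\<bar>clip c s - clip c t\<bar> \<le> \<bar>s - t\<bar>"
  unfolding clip_def by (auto simp: abs_le_iff max_def min_def)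

lemma square_add_le: fixes u v :: real shows "(u + v)^2 \<le> 2 * u^2 + 2 * v^2"
proof -
  have "0 \<le> (u - v)^2" by simp
  then show ?thesis unfolding power2_sum power2_diff by linarith
qed

lemma square_mult_diff_le:
  fixes a b p p' c Q :: real
  assumes "\<bar>b\<bar> \<le> c" "0 \<le> Q"
  shows "(a * p - b * p')^2 * Q \<le> 2 * p^2 * ((a - b)^2 * Q) + 2 * c^2 * ((p - p')^2 * Q)"
proof -
  have "(a * p - b * p')^2 \<le> 2 * (p * (a - b))^2 + 2 * (b * (p - p'))^2"
    using square_add_le[of "p * (a - b)" "b * (p - p')"] by (simp add: algebra_simps)
  also have "(b * (p - p'))^2 \<le> c^2 * (p - p')^2"
    unfolding power_mult_distrib using assms(1) power_mono[of "\<bar>b\<bar>" c 2]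
    by (intro mult_right_mono) auto
  finally have "(a * p - b * p')^2 \<le> 2 * p^2 * (a - b)^2 + 2 * c^2 * (p - p')^2"
    by (simp add: power_mult_distrib)
  then have "(a * p - b * p')^2 * Q \<le> (2 * p^2 * (a - b)^2 + 2 * c^2 * (p - p')^2) * Q"
    using assms(2) by (rule mult_right_mono)
  then show ?thesis by (simp add: algebra_simps)
qed

lemma abs_le_sup_norm: "bounded (range f) \<Longrightarrow> \<bar>f x\<bar> \<le> sup_norm f"
  unfolding sup_norm_def bounded_iff by (intro cSUP_upper) (auto simp: bdd_above_def)

lemma ennreal_combination_le:
  fixes x y z :: ennreal
  assumes "L \<ge> 0"
  shows "4 * x + y + 4 * ennreal L * z \<le> ennreal (4 * (L + 1)) * (x + y + z)"
proof -
  have "4 * x + y + 4 * ennreal L * z \<le> ennreal (4 * (L + 1)) * x + ennreal (4 * (L + 1)) * y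
      + ennreal (4 * (L + 1)) * z"
  proof (intro add_mono mult_right_mono)
    show "(4::ennreal) \<le> ennreal (4 * (L + 1))"
      using assms ennreal_leI[of 4 "4 * (L + 1)"] by simp
    show "y \<le> ennreal (4 * (L + 1)) * y"
      using assms ennreal_leI[of 1 "4 * (L + 1)"] mult_right_mono[of 1 "ennreal (4 * (L + 1))" y] by simp
    have "4 * ennreal L = ennreal (4 * L)" using assms by (simp add: ennreal_mult)
    also have "\<dots> \<le> ennreal (4 * (L + 1))" by (rule ennreal_leI) simp
    finally show "4 * ennreal L \<le> ennreal (4 * (L + 1))" .
  qed simp_all
  then show ?thesis by (simp add: distrib_left)
qed

section \<open>Moments on probability spaces\<close>

lemma (in finite_measure) integrable_bounded:
  fixes f :: "'a \<Rightarrow> real"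
  shows "f \<in> borel_measurable M \<Longrightarrow> (\<And>x. \<bar>f x\<bar> \<le> B) \<Longrightarrow> integrable M f"
  by (intro integrable_const_bound[where B=B]) auto

lemma (in finite_measure) integrable_square_bounded:
  fixes f :: "'a \<Rightarrow> real"
  assumes "f \<in> borel_measurable M" "\<And>x. \<bar>f x\<bar> \<le> B"
  shows "integrable M (\<lambda>x. (f x)^2)"
  using assms by (intro integrable_bounded[where B="B^2"])
    (auto intro: power_mono[of "\<bar>f _\<bar>" B 2, simplified])

lemma (in prob_space) square_integral_le:
  fixes u :: "'a \<Rightarrow> real"
  assumes "integrable M u" "integrable M (\<lambda>x. (u x)^2)"
  shows "(\<integral>x. u x \<partial>M)^2 \<le> (\<integral>x. (u x)^2 \<partial>M)"
  using variance_positive[of u] variance_eq[OF assms] by simp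

lemma (in prob_space) variance_le_integral_square_diff:
  fixes h :: "'a \<Rightarrow> real"
  assumes "integrable M h" "integrable M (\<lambda>x. (h x)^2)"
  shows "(\<integral>x. (h x)^2 \<partial>M) - (\<integral>x. h x \<partial>M)^2 \<le> (\<integral>x. (h x - m)^2 \<partial>M)"
proof -
  have "(\<integral>x. (h x - m)^2 \<partial>M) = (\<integral>x. (h x)^2 - 2 * m * h x + m^2 \<partial>M)"
    by (simp add: power2_diff algebra_simps)
  also have "\<dots> = (\<integral>x. (h x)^2 \<partial>M) - 2 * m * (\<integral>x. h x \<partial>M) + m^2"
    using assms prob_space by simp
  moreover have "0 \<le> ((\<integral>x. h x \<partial>M) - m)^2" by simp
  then have "0 \<le> (\<integral>x. h x \<partial>M)^2 - 2 * m * (\<integral>x. h x \<partial>M) + m^2"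
    by (simp add: power2_diff algebra_simps)
  ultimately show ?thesis by linarith
qed

lemma (in prob_space) moments_tendsto_of_L2:
  fixes h :: "nat \<Rightarrow> 'a \<Rightarrow> real"
  assumes [measurable]: "\<And>i. h i \<in> borel_measurable M" "f \<in> borel_measurable M"
    and hb: "\<And>i x. \<bar>h i x\<bar> \<le> c" and fb: "\<And>x. \<bar>f x\<bar> \<le> c"
    and L2: "(\<lambda>i. \<integral>x. (h i x - f x)^2 \<partial>M) \<longlonglongrightarrow> 0"
  shows "(\<lambda>i. \<integral>x. h i x \<partial>M) \<longlonglongrightarrow> (\<integral>x. f x \<partial>M)"
    and "(\<lambda>i. \<integral>x. (h i x)^2 \<partial>M) \<longlonglongrightarrow> (\<integral>x. (f x)^2 \<partial>M)"
proof -
  define A where "A i = (\<integral>x. \<bar>h i x - f x\<bar> \<partial>M)" for i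
  have dist_b: "\<bar>h i x - f x\<bar> \<le> 2 * c" for i x using hb[of i x] fb[of x] by linarith
  have int_h: "integrable M (h i)" "integrable M (\<lambda>x. (h i x)^2)" for i
    by (rule integrable_bounded[OF _ hb] integrable_square_bounded[OF _ hb]; simp)+
  have int_f: "integrable M f" "integrable M (\<lambda>x. (f x)^2)"
    by (rule integrable_bounded[OF _ fb] integrable_square_bounded[OF _ fb]; simp)+
  have A_le: "A i \<le> sqrt (\<integral>x. (h i x - f x)^2 \<partial>M)" for i
  proof -
    have "integrable M (\<lambda>x. \<bar>h i x - f x\<bar>)"
      by (rule integrable_bounded[where B="2 * c"]) (use dist_b in auto)
    moreover have "integrable M (\<lambda>x. \<bar>h i x - f x\<bar>^2)"
      by (rule integrable_square_bounded[where B="2 * c"]) (use dist_b in auto)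
    ultimately have "(A i)^2 \<le> (\<integral>x. (h i x - f x)^2 \<partial>M)"
      unfolding A_def using square_integral_le by fastforce
    then show ?thesis by (simp add: A_def real_le_rsqrt)
  qed
  have A0: "A \<longlonglongrightarrow> 0"
  proof (rule real_tendsto_sandwich[OF _ _ tendsto_const])
    show "\<forall>\<^sub>F i in sequentially. 0 \<le> A i" by (simp add: A_def)
    show "\<forall>\<^sub>F i in sequentially. A i \<le> sqrt (\<integral>x. (h i x - f x)^2 \<partial>M)" using A_le by simp
    show "(\<lambda>i. sqrt (\<integral>x. (h i x - f x)^2 \<partial>M)) \<longlonglongrightarrow> 0"
      using tendsto_real_sqrt[OF L2] by simp
  qed
  show "(\<lambda>i. \<integral>x. h i x \<partial>M) \<longlonglongrightarrow> (\<integral>x. f x \<partial>M)"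
  proof (rule LIM_zero_cancel, rule Lim_null_comparison[OF always_eventually A0], intro allI)
    fix i
    have "norm ((\<integral>x. h i x \<partial>M) - (\<integral>x. f x \<partial>M)) = norm (\<integral>x. h i x - f x \<partial>M)"
      using int_h int_f by simp
    also have "\<dots> \<le> A i" unfolding A_def using integral_norm_bound[of M "\<lambda>x. h i x - f x"] by simp
    finally show "norm ((\<integral>x. h i x \<partial>M) - (\<integral>x. f x \<partial>M)) \<le> A i" .
  qed
  show "(\<lambda>i. \<integral>x. (h i x)^2 \<partial>M) \<longlonglongrightarrow> (\<integral>x. (f x)^2 \<partial>M)"
  proof (rule LIM_zero_cancel, rule Lim_null_comparison[where g="\<lambda>i. 2 * c * A i"])
    show "(\<lambda>i. 2 * c * A i) \<longlonglongrightarrow> 0" using tendsto_mult_right_zero[OF A0] by simp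
    show "\<forall>\<^sub>F i in sequentially. norm ((\<integral>x. (h i x)^2 \<partial>M) - (\<integral>x. (f x)^2 \<partial>M)) \<le> 2 * c * A i"
    proof (intro always_eventually allI)
      fix i
      have pt: "\<bar>(h i x)^2 - (f x)^2\<bar> \<le> 2 * c * \<bar>h i x - f x\<bar>" for x
      proof -
        have "(h i x)^2 - (f x)^2 = (h i x + f x) * (h i x - f x)"
          by (simp add: algebra_simps power2_eq_square)
        moreover have "\<bar>h i x + f x\<bar> \<le> 2 * c" using hb[of i x] fb[of x] by linarith
        ultimately show ?thesis by (simp add: abs_mult mult_right_mono)
      qed
      have "norm ((\<integral>x. (h i x)^2 \<partial>M) - (\<integral>x. (f x)^2 \<partial>M)) = norm (\<integral>x. (h i x)^2 - (f x)^2 \<partial>M)"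
        using int_h int_f by simp
      also have "\<dots> \<le> (\<integral>x. \<bar>(h i x)^2 - (f x)^2\<bar> \<partial>M)"
        using integral_norm_bound[of M "\<lambda>x. (h i x)^2 - (f x)^2"] by simp
      also have "\<dots> \<le> (\<integral>x. 2 * c * \<bar>h i x - f x\<bar> \<partial>M)"
      proof (rule integral_mono')
        show "integrable M (\<lambda>x. 2 * c * \<bar>h i x - f x\<bar>)"
          using int_h int_f by simp
        show "0 \<le> 2 * c * \<bar>h i x - f x\<bar>" for x using hb[of i x] by simp
      qed (use pt in auto)
      also have "\<dots> = 2 * c * A i" unfolding A_def by simp
      finally show "norm ((\<integral>x. (h i x)^2 \<partial>M) - (\<integral>x. (f x)^2 \<partial>M)) \<le> 2 * c * A i" .
    qed
  qed
qed

lemma (in prob_space) abs_integral_le_bound: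
  fixes f :: "'a \<Rightarrow> real"
  assumes [measurable]: "f \<in> borel_measurable M" and fb: "\<And>x. \<bar>f x\<bar> \<le> c"
  shows "\<bar>\<integral>x. f x \<partial>M\<bar> \<le> c"
proof -
  have "\<bar>\<integral>x. f x \<partial>M\<bar> \<le> (\<integral>x. \<bar>f x\<bar> \<partial>M)" by (rule integral_abs_bound)
  also have "\<dots> \<le> (\<integral>x. c \<partial>M)"
    using fb[of undefined] by (intro integral_mono') (auto intro: fb)
  finally show ?thesis by (simp add: prob_space)
qed

section \<open>Jump kernels, carre du champ and the core\<close>

locale jump_kernel =
  fixes M :: "'a::polish_space measure"
    and q :: "'a \<Rightarrow> 'a \<Rightarrow> real"
  assumes M_borel: "sets M = sets borel"
    and M_prob: "prob_space M"
    and q_meas: "(\<lambda>(x, y). q x y) \<in> borel_measurable (M \<Otimes>\<^sub>M M)"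
    and q_nonneg: "\<And>x y. q x y \<ge> 0"
    and lam_fin: "lam M q < \<infinity>"
begin

lemma space_M [simp]: "space M = UNIV"
  using sets_eq_imp_space_eq[OF M_borel] by simp

lemma ident_measurable [measurable]: "(\<lambda>x. x) \<in> M \<rightarrow>\<^sub>M borel"
  by (rule measurable_ident_sets[OF M_borel])

lemma dist_measurable [measurable]: "(\<lambda>p. dist (fst p) (snd p)) \<in> borel_measurable (M \<Otimes>\<^sub>M M)"
proof -
  have "sets (M \<Otimes>\<^sub>M M) = sets (borel \<Otimes>\<^sub>M borel)"
    using M_borel by (intro sets_pair_measure_cong) auto
  moreover have "(\<lambda>p. dist (fst p) (snd p)) \<in> borel_measurable (borel \<Otimes>\<^sub>M borel :: ('a \<times> 'a) measure)"
    by measurable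
  ultimately show ?thesis by (metis measurable_cong_sets[OF _ refl])
qed

lemma Collect_in_sets_M:
  assumes [measurable]: "Measurable.pred M P"
  shows "{x. P x} \<in> sets M"
proof -
  have "{x \<in> space M. P x} \<in> sets M" by measurable
  then show ?thesis by simp
qed

lemma q_measurable [measurable]: "(\<lambda>p. q (fst p) (snd p)) \<in> borel_measurable (M \<Otimes>\<^sub>M M)"
  using q_meas by (simp add: case_prod_beta')

lemma q_measurable_snd [measurable]: "q x \<in> borel_measurable M"
  using measurable_Pair2[OF q_meas, of x] by (simp add: case_prod_beta')

lemma nn_integral_measurable_M:
  "(\<lambda>(x, y). f x y) \<in> borel_measurable (M \<Otimes>\<^sub>M M) \<Longrightarrow> (\<lambda>x. \<integral>\<^sup>+ y. f x y \<partial>M) \<in> borel_measurable M"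
  using sigma_finite_measure.borel_measurable_nn_integral[of M f]
    prob_space_imp_sigma_finite[OF M_prob] by simp

lemma Gam_measurable [measurable]:
  assumes [measurable]: "u \<in> borel_measurable M"
  shows "Gam M q u \<in> borel_measurable M"
  unfolding Gam_def by (rule nn_integral_measurable_M) measurable

lemma lam_eq_ennreal: obtains L where "L \<ge> 0" "lam M q = ennreal L"
  using lam_fin by (cases "lam M q") auto

lemma cutoff_measurable [measurable]: "cutoff x0 n k \<in> borel_measurable M"
  unfolding cutoff_def by measurable

lemma clip_measurable [measurable]:
  assumes [measurable]: "u \<in> borel_measurable M"
  shows "(\<lambda>x. clip c (u x)) \<in> borel_measurable M"
  unfolding clip_def by measurable

lemma Gam_diff_const: "Gam M q (\<lambda>x. u x - m) = Gam M q u"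
  unfolding Gam_def by simp

lemma Gam_uminus: "Gam M q (\<lambda>x. - u x) = Gam M q u"
  unfolding Gam_def by (simp add: power2_commute algebra_simps)

lemma Gam_mono:
  assumes "\<And>y. (u x - u y)^2 \<le> (v x - v y)^2"
  shows "Gam M q u x \<le> Gam M q v x"
  unfolding Gam_def
  using assms q_nonneg by (intro nn_integral_mono ennreal_leI mult_right_mono) auto

lemma Gam_clip_le: "Gam M q (\<lambda>x. clip c (u x)) x \<le> Gam M q u x"
  by (rule Gam_mono) (metis abs_clip_diff_le abs_ge_zero power2_abs power_mono)

lemma Gam_add_le:
  assumes [measurable]: "u \<in> borel_measurable M" "v \<in> borel_measurable M"
  shows "Gam M q (\<lambda>x. u x + v x) x \<le> 2 * Gam M q u x + 2 * Gam M q v x"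
proof -
  have "Gam M q (\<lambda>x. u x + v x) x \<le>
      (\<integral>\<^sup>+y. 2 * ennreal ((u x - u y)^2 * q x y) + 2 * ennreal ((v x - v y)^2 * q x y) \<partial>M)"
    unfolding Gam_def
  proof (rule nn_integral_mono)
    fix y
    have "(u x + v x - (u y + v y))^2 * q x y \<le> (2 * (u x - u y)^2 + 2 * (v x - v y)^2) * q x y"
      using square_add_le[of "u x - u y" "v x - v y"] q_nonneg[of x y]
      by (intro mult_right_mono) (auto simp: algebra_simps)
    then have "ennreal ((u x + v x - (u y + v y))^2 * q x y)
        \<le> ennreal (2 * ((u x - u y)^2 * q x y) + 2 * ((v x - v y)^2 * q x y))"
      by (intro ennreal_leI) (simp add: algebra_simps)
    also have "\<dots> = 2 * ennreal ((u x - u y)^2 * q x y) + 2 * ennreal ((v x - v y)^2 * q x y)"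
      using q_nonneg[of x y] by (simp add: ennreal_plus ennreal_mult)
    finally show "ennreal ((u x + v x - (u y + v y))^2 * q x y) \<le> \<dots>" .
  qed
  also have "\<dots> = 2 * Gam M q u x + 2 * Gam M q v x"
    unfolding Gam_def by (subst nn_integral_add) (auto simp: nn_integral_cmult)
  finally show ?thesis .
qed

abbreviation cutoff_jump :: "'a \<Rightarrow> nat \<Rightarrow> nat \<Rightarrow> 'a \<Rightarrow> ennreal" where
  "cutoff_jump x0 n k x \<equiv> \<integral>\<^sup>+y. ennreal ((cutoff x0 n k x - cutoff x0 n k y)^2 * q x y) \<partial>M"

lemma cutoff_jump_le_lam:
  assumes "k \<ge> 1"
  shows "cutoff_jump x0 n k x \<le> lam M q"
proof -
  have "cutoff_jump x0 n k x \<le> (\<integral>\<^sup>+y. ennreal (min 1 ((dist x y)^2) * q x y) \<partial>M)"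
    using assms by (intro nn_integral_mono ennreal_leI mult_right_mono cutoff_diff_square_le q_nonneg)
  also have "\<dots> \<le> lam M q"
    unfolding lam_def by (rule SUP_upper) simp
  finally show ?thesis .
qed

lemma Gam_mult_cutoff_le:
  assumes [measurable]: "h \<in> borel_measurable M" and hb: "\<And>y. \<bar>h y\<bar> \<le> c"
  shows "Gam M q (\<lambda>x. h x * cutoff x0 n k x) x
     \<le> ennreal (2 * (cutoff x0 n k x)^2) * Gam M q h x + ennreal (2 * c^2) * cutoff_jump x0 n k x"
proof -
  let ?\<chi> = "cutoff x0 n k"
  have "Gam M q (\<lambda>x. h x * ?\<chi> x) x \<le> (\<integral>\<^sup>+y. ennreal (2 * (?\<chi> x)^2) * ennreal ((h x - h y)^2 * q x y)
     + ennreal (2 * c^2) * ennreal ((?\<chi> x - ?\<chi> y)^2 * q x y) \<partial>M)"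
    unfolding Gam_def
  proof (rule nn_integral_mono)
    fix y
    have "ennreal ((h x * ?\<chi> x - h y * ?\<chi> y)^2 * q x y) \<le>
      ennreal (2 * (?\<chi> x)^2 * ((h x - h y)^2 * q x y) + 2 * c^2 * ((?\<chi> x - ?\<chi> y)^2 * q x y))"
      by (intro ennreal_leI square_mult_diff_le hb q_nonneg)
    then show "ennreal ((h x * ?\<chi> x - h y * ?\<chi> y)^2 * q x y) \<le> ennreal (2 * (?\<chi> x)^2) *
      ennreal ((h x - h y)^2 * q x y) + ennreal (2 * c^2) * ennreal ((?\<chi> x - ?\<chi> y)^2 * q x y)"
      using q_nonneg[of x y] by (simp add: ennreal_plus ennreal_mult)
  qed
  also have "\<dots> = ennreal (2 * (?\<chi> x)^2) * Gam M q h x + ennreal (2 * c^2) * cutoff_jump x0 n k x"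
    unfolding Gam_def by (subst nn_integral_add) (auto simp: nn_integral_cmult)
  finally show ?thesis .
qed

lemma coreA_measurable: "h \<in> coreA M q \<Longrightarrow> h \<in> borel_measurable M"
  unfolding coreA_def by auto

lemma coreA_bounded:
  assumes "h \<in> coreA M q"
  obtains B where "\<And>x. \<bar>h x\<bar> \<le> B"
  using assms unfolding coreA_def bounded_iff by auto

lemma coreA_Gam_bounded:
  assumes "h \<in> coreA M q"
  obtains C where "C \<ge> 0" "\<And>x. Gam M q h x \<le> ennreal C"
proof -
  obtain C where "\<And>x. Gam M q h x \<le> ennreal C" using assms unfolding coreA_def by auto
  then show ?thesis by (intro that[of "max C 0"]) (auto intro: order_trans ennreal_leI)
qed

lemma coreA_intro:
  assumes "\<And>x. \<bar>h x\<bar> \<le> B" "\<And>x. Gam M q h x \<le> ennreal C" "h \<in> borel_measurable M"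
  shows "h \<in> coreA M q"
  using assms unfolding coreA_def bounded_iff by auto

lemma coreA_add:
  assumes u: "u \<in> coreA M q" and v: "v \<in> coreA M q"
  shows "(\<lambda>x. u x + v x) \<in> coreA M q"
proof -
  note [measurable] = coreA_measurable[OF u] coreA_measurable[OF v]
  obtain C1 where C1: "C1 \<ge> 0" "\<And>x. Gam M q u x \<le> ennreal C1" using coreA_Gam_bounded[OF u] by metis
  obtain C2 where C2: "C2 \<ge> 0" "\<And>x. Gam M q v x \<le> ennreal C2" using coreA_Gam_bounded[OF v] by metis
  obtain B1 where B1: "\<And>x. \<bar>u x\<bar> \<le> B1" using coreA_bounded[OF u] by metis
  obtain B2 where B2: "\<And>x. \<bar>v x\<bar> \<le> B2" using coreA_bounded[OF v] by metis
  have "\<bar>u x + v x\<bar> \<le> B1 + B2" for x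
    using abs_triangle_ineq[of "u x" "v x"] B1[of x] B2[of x] by linarith
  moreover have "Gam M q (\<lambda>x. u x + v x) x \<le> ennreal (2 * C1 + 2 * C2)" for x
  proof -
    have "Gam M q (\<lambda>x. u x + v x) x \<le> 2 * Gam M q u x + 2 * Gam M q v x"
      by (rule Gam_add_le) measurable
    also have "\<dots> \<le> 2 * ennreal C1 + 2 * ennreal C2"
      using C1 C2 by (intro add_mono mult_left_mono) auto
    finally show ?thesis using C1 C2 by (simp add: ennreal_plus ennreal_mult)
  qed
  ultimately show ?thesis by (rule coreA_intro) measurable
qed

lemma coreA_uminus: "v \<in> coreA M q \<Longrightarrow> (\<lambda>x. - v x) \<in> coreA M q"
  unfolding coreA_def bounded_iff by (auto simp: Gam_uminus)

lemma coreA_diff: "u \<in> coreA M q \<Longrightarrow> v \<in> coreA M q \<Longrightarrow> (\<lambda>x. u x - v x) \<in> coreA M q"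
  using coreA_add[OF _ coreA_uminus, of u v] by simp

lemma coreA_clip:
  assumes u: "u \<in> coreA M q" and "c \<ge> 0"
  shows "(\<lambda>x. clip c (u x)) \<in> coreA M q"
proof -
  obtain C where "\<And>x. Gam M q u x \<le> ennreal C" using coreA_Gam_bounded[OF u] by metis
  then show ?thesis
    using coreA_measurable[OF u] abs_clip_le[OF \<open>c \<ge> 0\<close>]
    by (intro coreA_intro[where B=c and C=C]) (auto intro: order_trans[OF Gam_clip_le])
qed

lemma coreA_mult_cutoff_diff:
  assumes h: "h \<in> coreA M q" and hb: "\<And>x. \<bar>h x\<bar> \<le> c" and k: "k \<ge> 1" and m: "\<bar>m\<bar> \<le> c"
  shows "(\<lambda>x. h x * cutoff x0 n k x - m) \<in> coreA M q"
proof -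
  note [measurable] = coreA_measurable[OF h]
  obtain C where C: "C \<ge> 0" "\<And>x. Gam M q h x \<le> ennreal C" using coreA_Gam_bounded[OF h] by metis
  obtain L where L: "L \<ge> 0" "lam M q = ennreal L" using lam_eq_ennreal by metis
  have "\<bar>h x * cutoff x0 n k x - m\<bar> \<le> 2 * c" for x
    using abs_mult_cutoff_le[OF hb[of x], of x0 n k x] m by linarith
  moreover have "Gam M q (\<lambda>x. h x * cutoff x0 n k x - m) x \<le> ennreal (2 * C + 2 * c^2 * L)" for x
  proof -
    have "Gam M q (\<lambda>x. h x * cutoff x0 n k x - m) x
        \<le> ennreal (2 * (cutoff x0 n k x)^2) * Gam M q h x + ennreal (2 * c^2) * cutoff_jump x0 n k x"
      unfolding Gam_diff_const by (rule Gam_mult_cutoff_le[OF _ hb]) measurable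
    also have "\<dots> \<le> ennreal 2 * ennreal C + ennreal (2 * c^2) * ennreal L"
      using cutoff_nonneg[of x0 n k x] cutoff_le_one[of x0 n k x] C(2)[of x]
        cutoff_jump_le_lam[OF k, of x0 n x] L
      by (intro add_mono mult_mono ennreal_leI) (auto simp: power_le_one)
    finally show ?thesis
      using C L by (simp add: ennreal_plus ennreal_mult)
  qed
  ultimately show ?thesis by (rule coreA_intro) measurable
qed

lemma energy_nonneg: "energy M q P u \<ge> 0"
  unfolding energy_def by simp

lemma energy_limit_nonneg: "(\<lambda>i. energy M q P (fs i)) \<longlonglongrightarrow> e \<Longrightarrow> e \<ge> 0"
  by (erule LIMSEQ_le_const) (simp add: energy_nonneg)

context
  fixes P :: "'a measure"
  assumes P_sets [measurable_cong]: "sets P = sets M" and P_finite: "finite_measure P"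
begin

lemma nn_integral_Gam_eq_energy:
  assumes "h \<in> coreA M q"
  shows "(\<integral>\<^sup>+x. Gam M q h x \<partial>P) = ennreal (energy M q P h)"
proof -
  obtain C where C: "C \<ge> 0" "\<And>x. Gam M q h x \<le> ennreal C" using coreA_Gam_bounded[OF assms] by metis
  have "(\<integral>\<^sup>+x. Gam M q h x \<partial>P) \<le> (\<integral>\<^sup>+x. ennreal C \<partial>P)"
    by (intro nn_integral_mono C)
  also have "\<dots> < \<infinity>"
    using finite_measure.emeasure_finite[OF P_finite, of "space P"]
    by (simp add: ennreal_mult_less_top top.not_eq_extremum)
  finally show ?thesis unfolding energy_def by simp
qed

lemma energy_add_le:
  assumes u: "u \<in> coreA M q" and v: "v \<in> coreA M q"
  shows "energy M q P (\<lambda>x. u x + v x) \<le> 2 * energy M q P u + 2 * energy M q P v"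
proof -
  note [measurable] = coreA_measurable[OF u] coreA_measurable[OF v]
  have "(\<integral>\<^sup>+x. Gam M q (\<lambda>x. u x + v x) x \<partial>P) \<le> (\<integral>\<^sup>+x. 2 * Gam M q u x + 2 * Gam M q v x \<partial>P)"
    by (intro nn_integral_mono Gam_add_le) measurable
  also have "\<dots> = 2 * (\<integral>\<^sup>+x. Gam M q u x \<partial>P) + 2 * (\<integral>\<^sup>+x. Gam M q v x \<partial>P)"
    by (subst nn_integral_add) (auto simp: nn_integral_cmult)
  also have "\<dots> = ennreal (2 * energy M q P u + 2 * energy M q P v)"
    using energy_nonneg[of P u] energy_nonneg[of P v]
    by (simp add: nn_integral_Gam_eq_energy u v ennreal_plus ennreal_mult)
  finally show ?thesis
    unfolding energy_def using energy_nonneg[of P u] energy_nonneg[of P v]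
    by (intro enn2real_leI) simp_all
qed

lemma energy_clip_le:
  assumes "u \<in> coreA M q"
  shows "energy M q P (\<lambda>x. clip c (u x)) \<le> energy M q P u"
  unfolding energy_def using nn_integral_Gam_eq_energy[OF assms]
  by (intro enn2real_mono nn_integral_mono Gam_clip_le) auto

text \<open>By the Cauchy property the energies are bounded, so a subsequence has convergent energies.\<close>
lemma approx_seq_convergent_energy:
  assumes ap: "approx_seq M q P f fs"
  obtains gs e where "approx_seq M q P f gs" "(\<lambda>i. energy M q P (gs i)) \<longlonglongrightarrow> e"
proof -
  have fs: "fs i \<in> coreA M q" for i using ap unfolding approx_seq_def by auto
  obtain N0 where N0: "\<And>m n. m \<ge> N0 \<Longrightarrow> n \<ge> N0 \<Longrightarrow> energy M q P (\<lambda>x. fs m x - fs n x) < 1"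
    using ap unfolding approx_seq_def by (meson zero_less_one)
  define E where "E i = energy M q P (fs i)" for i
  have E0: "0 \<le> E i" for i unfolding E_def by (rule energy_nonneg)
  have "E i \<le> (\<Sum>j\<le>N0. E j) + 2 * E N0 + 2" for i
  proof (cases "i \<le> N0")
    case True
    then have "E i \<le> (\<Sum>j\<le>N0. E j)" using E0 by (intro member_le_sum) auto
    then show ?thesis using E0[of N0] by linarith
  next
    case False
    have "E i = energy M q P (\<lambda>x. fs N0 x + (fs i x - fs N0 x))" unfolding E_def by simp
    also have "\<dots> \<le> 2 * E N0 + 2 * energy M q P (\<lambda>x. fs i x - fs N0 x)"
      unfolding E_def by (rule energy_add_le[OF fs coreA_diff[OF fs fs]])
    also have "\<dots> \<le> 2 * E N0 + 2" using N0[of i N0] False by simp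
    finally show ?thesis using sum_nonneg[of "{..N0}" E] E0 by force
  qed
  then have "bounded (range E)"
    unfolding bounded_iff using E0 by (intro exI[of _ "(\<Sum>j\<le>N0. E j) + 2 * E N0 + 2"]) auto
  then obtain \<sigma> e where \<sigma>: "strict_mono \<sigma>" "(E \<circ> \<sigma>) \<longlonglongrightarrow> e"
    using bounded_imp_convergent_subsequence by blast
  have "approx_seq M q P f (\<lambda>i. fs (\<sigma> i))"
    unfolding approx_seq_def
  proof (intro conjI allI impI)
    show "fs (\<sigma> i) \<in> coreA M q" for i by (rule fs)
    show "f \<in> borel_measurable P" "integrable P (\<lambda>x. (f x)^2)"
      using ap unfolding approx_seq_def by auto
    have "(\<lambda>i. \<integral>x. (fs i x - f x)^2 \<partial>P) \<longlonglongrightarrow> 0" using ap unfolding approx_seq_def by auto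
    from LIMSEQ_subseq_LIMSEQ[OF this \<sigma>(1)]
    show "(\<lambda>i. \<integral>x. (fs (\<sigma> i) x - f x)^2 \<partial>P) \<longlonglongrightarrow> 0" by (simp add: o_def)
    fix \<epsilon> :: real assume "\<epsilon> > 0"
    then obtain N1 where "\<And>m n. m \<ge> N1 \<Longrightarrow> n \<ge> N1 \<Longrightarrow> energy M q P (\<lambda>x. fs m x - fs n x) < \<epsilon>"
      using ap unfolding approx_seq_def by meson
    then show "\<exists>N0. \<forall>m\<ge>N0. \<forall>n\<ge>N0. energy M q P (\<lambda>x. fs (\<sigma> m) x - fs (\<sigma> n) x) < \<epsilon>"
      using seq_suble[OF \<sigma>(1)] by (meson order_trans)
  qed
  then show ?thesis using \<sigma>(2) that unfolding E_def o_def by blast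
qed

lemma coreA_form_val_le_energy:
  assumes g: "g \<in> coreA M q"
  shows "g \<in> form_dom M q P" "form_val M q P g \<le> energy M q P g"
proof -
  obtain B where "\<And>x. \<bar>g x\<bar> \<le> B" using coreA_bounded[OF g] by metis
  then have "integrable P (\<lambda>x. (g x)^2)"
    using coreA_measurable[OF g] by (intro finite_measure.integrable_square_bounded[OF P_finite]) auto
  then have ap: "approx_seq M q P g (\<lambda>_. g)"
    unfolding approx_seq_def using g coreA_measurable[OF g] by (simp add: energy_def Gam_def)
  then show "g \<in> form_dom M q P" unfolding form_dom_def by auto
  show "form_val M q P g \<le> energy M q P g"
    unfolding form_val_def
  proof (rule cInf_lower)
    show "energy M q P g \<in> {e. \<exists>fs. approx_seq M q P g fs \<and> (\<lambda>i. energy M q P (fs i)) \<longlonglongrightarrow> e}"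
      using ap by (intro CollectI exI[of _ "\<lambda>_. g"] conjI tendsto_const)
    show "bdd_below {e. \<exists>fs. approx_seq M q P g fs \<and> (\<lambda>i. energy M q P (fs i)) \<longlonglongrightarrow> e}"
      unfolding bdd_below_def by (auto intro: energy_limit_nonneg)
  qed
qed

end

lemma nn_integral_cutoff_jump_le:
  assumes k: "k \<ge> 1"
  shows "(\<integral>\<^sup>+x. cutoff_jump x0 n k x \<partial>M)
     \<le> gammat M q k + lam M q * ennreal (measure M {x. dist x0 x > real n - real k})"
proof -
  let ?long = "\<lambda>x y. if dist x y > real k then ennreal (q x y) else 0"
  let ?far = "\<lambda>x. if dist x0 x > real n - real k then lam M q else 0"
  have "(\<integral>\<^sup>+x. cutoff_jump x0 n k x \<partial>M) \<le> (\<integral>\<^sup>+x. (\<integral>\<^sup>+y. ?long x y \<partial>M) + ?far x \<partial>M)"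
  proof (rule nn_integral_mono)
    fix x
    have "cutoff_jump x0 n k x \<le> (\<integral>\<^sup>+y. ?long x y + (if dist x0 x > real n - real k then
               ennreal (min 1 ((dist x y)^2) * q x y) else 0) \<partial>M)"
      using q_nonneg
      by (intro nn_integral_mono order_trans[OF ennreal_leI[OF cutoff_diff_square_mult_le[OF k]]])
        (auto simp: ennreal_plus)
    also have "\<dots> = (\<integral>\<^sup>+y. ?long x y \<partial>M) + (\<integral>\<^sup>+y. (if dist x0 x > real n - real k then
               ennreal (min 1 ((dist x y)^2) * q x y) else 0) \<partial>M)"
      by (rule nn_integral_add) measurable
    also have "\<dots> \<le> (\<integral>\<^sup>+y. ?long x y \<partial>M) + ?far x"
      unfolding lam_def by (intro add_left_mono) (auto intro: SUP_upper)
    finally show "cutoff_jump x0 n k x \<le> (\<integral>\<^sup>+y. ?long x y \<partial>M) + ?far x" .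
  qed
  also have "\<dots> = (\<integral>\<^sup>+x. \<integral>\<^sup>+y. ?long x y \<partial>M \<partial>M) + (\<integral>\<^sup>+x. ?far x \<partial>M)"
    by (rule nn_integral_add) (measurable, rule nn_integral_measurable_M, measurable)
  also have "(\<integral>\<^sup>+x. ?far x \<partial>M) = lam M q * emeasure M {x. dist x0 x > real n - real k}"
    by (subst nn_integral_cmult_indicator[symmetric])
      (auto intro!: nn_integral_cong Collect_in_sets_M simp: indicator_def)
  also have "emeasure M {x. dist x0 x > real n - real k} = measure M {x. dist x0 x > real n - real k}"
    using M_prob by (intro finite_measure.emeasure_eq_measure) (simp add: prob_space_def)
  finally show ?thesis unfolding gammat_def .
qed

end

section \<open>The weighted measure\<close>

locale weighted_jump_kernel = jump_kernel +
  fixes x0 :: 'a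
    and V :: "'a \<Rightarrow> real"
    and \<beta> :: "real \<Rightarrow> real"
  assumes V_meas [measurable]: "V \<in> borel_measurable M"
    and V_loc_bdd: "\<And>r. r > 0 \<Longrightarrow> \<exists>C. \<forall>x. dist x0 x \<le> r \<longrightarrow> \<bar>V x\<bar> \<le> C"
    and V_norm: "(\<integral>\<^sup>+ x. ennreal (exp (V x)) \<partial>M) = 1"
    and \<beta>_pos: "\<And>r. r > 0 \<Longrightarrow> \<beta> r > 0"
    and \<beta>_decr: "\<And>s t. 0 < s \<Longrightarrow> s \<le> t \<Longrightarrow> \<beta> t \<le> \<beta> s"
    and WPI: "weak_poincare M q M \<beta>"
begin

abbreviation MV :: "'a measure" where
  "MV \<equiv> density M (\<lambda>x. ennreal (exp (V x)))"

lemma prob_space_MV: "prob_space MV"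
proof
  show "emeasure MV (space MV) = 1"
    using V_norm sets.top[of M] by (subst emeasure_density) (auto simp: indicator_def)
qed

lemma integral_MV:
  assumes [measurable]: "f \<in> borel_measurable M"
  shows "(\<integral>x. f x \<partial>MV) = (\<integral>x. exp (V x) * f x \<partial>M)"
  by (subst integral_density) auto

lemma measure_MV: "A \<in> sets M \<Longrightarrow> measure MV A = (\<integral>x. exp (V x) * indicator A x \<partial>M)"
  using integral_MV[of "indicator A"] by simp

lemma integrable_exp_V: "integrable M (\<lambda>x. exp (V x))"
  by (rule integrableI_bounded) (use V_norm in auto)

lemma measure_MV_le:
  assumes [measurable]: "A \<in> sets M"
  shows "measure MV A \<le> exp t * measure M A + measure MV {x. V x > t}"
proof -
  interpret M: prob_space M by (rule M_prob)
  interpret MV: prob_space MV by (rule prob_space_MV)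
  have high: "{x. V x > t} \<in> sets M" by (intro Collect_in_sets_M) measurable
  have "{x. V x \<le> t} \<in> sets M" by (intro Collect_in_sets_M) measurable
  with assms have low: "A \<inter> {x. V x \<le> t} \<in> sets M" by blast
  have "measure MV A \<le> measure MV ((A \<inter> {x. V x \<le> t}) \<union> {x. V x > t})"
  proof (rule MV.finite_measure_mono)
    show "A \<subseteq> (A \<inter> {x. V x \<le> t}) \<union> {x. V x > t}" by auto
    show "(A \<inter> {x. V x \<le> t}) \<union> {x. V x > t} \<in> sets MV"
      using sets.Un[OF low high] by (simp only: sets_density)
  qed
  also have "\<dots> \<le> measure MV (A \<inter> {x. V x \<le> t}) + measure MV {x. V x > t}"
    by (rule measure_Un_le) (simp_all only: sets_density low high)
  also have "measure MV (A \<inter> {x. V x \<le> t}) \<le> (\<integral>x. exp t * indicator A x \<partial>M)"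
    unfolding measure_MV[OF low]
  proof (rule integral_mono')
    show "integrable M (\<lambda>x. exp t * indicator A x)"
      by (rule M.integrable_bounded[where B="exp t"]) (auto simp: indicator_def)
    show "exp (V x) * indicator (A \<inter> {x. V x \<le> t}) x \<le> exp t * indicator A x" for x
      by (auto simp: indicator_def)
  qed simp
  also have "(\<integral>x. exp t * indicator A x \<partial>M) = exp t * measure M A"
    by simp
  finally show ?thesis by simp
qed

lemma measure_MV_V_gt_small:
  assumes "d > 0"
  obtains t where "measure MV {x. V x > t} < d"
proof -
  interpret MV: prob_space MV by (rule prob_space_MV)
  have "{x. V x > real j} \<in> sets M" for j by (intro Collect_in_sets_M) measurable
  then have "(\<lambda>j. measure MV {x. V x > real j}) \<longlonglongrightarrow> measure MV (\<Inter>j. {x. V x > real j})"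
    by (intro MV.finite_Lim_measure_decseq) (auto simp: decseq_def)
  moreover have "(\<Inter>j. {x. V x > real j}) = {}"
  proof (intro equals0I)
    fix x assume "x \<in> (\<Inter>j. {x. V x > real j})"
    moreover obtain j :: nat where "V x < real j" using reals_Archimedean2 by blast
    ultimately show False by (meson INT_E UNIV_I less_asym mem_Collect_eq)
  qed
  ultimately have "(\<lambda>j. measure MV {x. V x > real j}) \<longlonglongrightarrow> 0" by simp
  from LIMSEQ_D[OF this assms] obtain j where "measure MV {x. V x > real j} < d" by auto
  then show ?thesis by (rule that)
qed

lemma
  assumes "R > 0"
  shows V_bdd_above: "bdd_above (V ` {x. dist x0 x \<le> R})"
    and V_bdd_below: "bdd_below (V ` {x. dist x0 x \<le> R})"
proof -
  obtain C where C: "\<And>x. dist x0 x \<le> R \<Longrightarrow> \<bar>V x\<bar> \<le> C" using V_loc_bdd[OF assms] by blast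
  show "bdd_above (V ` {x. dist x0 x \<le> R})"
    unfolding bdd_above_def using C by (intro exI[of _ C]) (auto simp: abs_le_iff)
  show "bdd_below (V ` {x. dist x0 x \<le> R})"
    unfolding bdd_below_def using C by (intro exI[of _ "- C"]) (force simp: abs_le_iff)
qed

lemma V_le_Zt: "n \<ge> 1 \<Longrightarrow> dist x0 x \<le> real n \<Longrightarrow> V x \<le> Zt x0 V n"
  unfolding Zt_def by (rule cSUP_upper) (auto intro: V_bdd_above)

lemma INF_le_V: "dist x0 x \<le> real n + real k + 1 \<Longrightarrow>
    (INF x\<in>{x. dist x0 x \<le> real n + real k + 1}. V x) \<le> V x"
  by (rule cINF_lower) (auto intro: V_bdd_below)

lemma Zt_mono: "n \<ge> 1 \<Longrightarrow> Zt x0 V 1 \<le> Zt x0 V n"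
  unfolding Zt_def
  by (rule cSUP_subset_mono) (auto intro: V_bdd_above exI[of _ x0])

lemma weak_poincare_coreA:
  assumes g: "g \<in> coreA M q" and gb: "\<And>x. \<bar>g x\<bar> \<le> B"
    and g0: "(\<integral>x. g x \<partial>M) = 0" and s: "s > 0"
  shows "(\<integral>x. (g x)^2 \<partial>M) \<le> \<beta> s * energy M q M g + s * B^2"
proof -
  have fin: "finite_measure M" using M_prob by (simp add: prob_space_def)
  note dom = coreA_form_val_le_energy[OF refl fin g]
  have "bounded (range g)" using g unfolding coreA_def by auto
  then have "(\<integral>x. (g x)^2 \<partial>M) \<le> \<beta> s * form_val M q M g + s * (sup_norm g)^2"
    using WPI s dom(1) g0 unfolding weak_poincare_def by blast
  also have "\<dots> \<le> \<beta> s * energy M q M g + s * B^2"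
  proof (intro add_mono mult_left_mono)
    have "sup_norm g \<le> B" unfolding sup_norm_def by (rule cSUP_least) (use gb in auto)
    moreover have "0 \<le> sup_norm g"
      unfolding sup_norm_def using gb by (intro cSUP_upper2[of _ _ undefined]) (auto simp: bdd_above_def)
    ultimately show "(sup_norm g)^2 \<le> B^2" by (simp add: power_mono)
  qed (use dom(2) \<beta>_pos[OF s] s in auto)
  finally show ?thesis .
qed

text \<open>Outside the ball of radius n only the crude bound 2c on h - m is used; inside it,
  exp V is at most exp (Zt x0 V n) and the cutoff equals 1.\<close>
lemma variance_MV_le_localized:
  assumes [measurable]: "h \<in> borel_measurable M" and hb: "\<And>x. \<bar>h x\<bar> \<le> c"
    and m: "\<bar>m\<bar> \<le> c" and n: "n \<ge> 1" and k: "k \<ge> 1"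
  shows "(\<integral>x. (h x)^2 \<partial>MV) - (\<integral>x. h x \<partial>MV)^2 \<le>
     exp (Zt x0 V n) * (\<integral>x. (h x * cutoff x0 n k x - m)^2 \<partial>M)
     + 4 * c^2 * measure MV {x. dist x0 x > real n}"
proof -
  interpret M: prob_space M by (rule M_prob)
  interpret MV: prob_space MV by (rule prob_space_MV)
  let ?\<chi> = "cutoff x0 n k" and ?A = "{x. dist x0 x > real n}"
  have A [measurable]: "?A \<in> sets M" by (intro Collect_in_sets_M) measurable
  have hcut: "\<bar>h x * ?\<chi> x - m\<bar> \<le> 2 * c" for x
    using abs_mult_cutoff_le[OF hb[of x], of x0 n k x] m by linarith
  have int_cut: "integrable M (\<lambda>x. (h x * ?\<chi> x - m)^2)"
    using hcut by (intro M.integrable_square_bounded) auto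
  have int_A: "integrable M (\<lambda>x. exp (V x) * indicator ?A x)"
    using integrable_exp_V by (intro integrable_real_mult_indicator) auto
  have "(\<integral>x. (h x)^2 \<partial>MV) - (\<integral>x. h x \<partial>MV)^2 \<le> (\<integral>x. (h x - m)^2 \<partial>MV)"
    using hb by (intro MV.variance_le_integral_square_diff MV.integrable_bounded
        MV.integrable_square_bounded) auto
  also have "\<dots> = (\<integral>x. exp (V x) * (h x - m)^2 \<partial>M)" by (rule integral_MV) measurable
  also have "\<dots> \<le> (\<integral>x. exp (Zt x0 V n) * (h x * ?\<chi> x - m)^2 + 4 * c^2 * (exp (V x) * indicator ?A x) \<partial>M)"
  proof (rule integral_mono')
    show "integrable M (\<lambda>x. exp (Zt x0 V n) * (h x * ?\<chi> x - m)^2 + 4 * c^2 * (exp (V x) * indicator ?A x))"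
      using int_cut int_A by simp
    fix x
    show "0 \<le> exp (Zt x0 V n) * (h x * ?\<chi> x - m)^2 + 4 * c^2 * (exp (V x) * indicator ?A x)"
      by (simp add: indicator_def)
    show "exp (V x) * (h x - m)^2 \<le> exp (Zt x0 V n) * (h x * ?\<chi> x - m)^2 + 4 * c^2 * (exp (V x) * indicator ?A x)"
    proof (cases "x \<in> ?A")
      case True
      have "\<bar>h x - m\<bar> \<le> 2 * c" using hb[of x] m by linarith
      then have "(h x - m)^2 \<le> 4 * c^2" using power_mono[of "\<bar>h x - m\<bar>" "2 * c" 2] by simp
      then show ?thesis using True by (simp add: indicator_def add_increasing)
    next
      case False
      then have "?\<chi> x = 1" "V x \<le> Zt x0 V n" using n k by (auto intro: cutoff_eq_one V_le_Zt)
      then show ?thesis using False by (simp add: mult_right_mono)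
    qed
  qed
  also have "\<dots> = exp (Zt x0 V n) * (\<integral>x. (h x * ?\<chi> x - m)^2 \<partial>M) + 4 * c^2 * measure MV ?A"
    using int_cut int_A by (simp add: measure_MV[OF A])
  finally show ?thesis .
qed

text \<open>On the support of the cutoff, which lies in the ball of radius n + k, the weight exp V is
  at least exp of its infimum over the ball of radius n + k + 1.\<close>
lemma energy_mult_cutoff_le:
  assumes h: "h \<in> coreA M q" and hb: "\<And>x. \<bar>h x\<bar> \<le> c"
    and n: "n \<ge> 1" and k: "k \<ge> 1"
    and cut: "(\<integral>\<^sup>+x. cutoff_jump x0 n k x \<partial>M) = ennreal t" and t: "t \<ge> 0"
  shows "energy M q M (\<lambda>x. h x * cutoff x0 n k x - m) \<le>
    2 * exp (- (INF x\<in>{x. dist x0 x \<le> real n + real k + 1}. V x)) * energy M q MV h + 2 * c^2 * t"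
proof -
  let ?I = "INF x\<in>{x. dist x0 x \<le> real n + real k + 1}. V x"
  let ?\<chi> = "cutoff x0 n k"
  note [measurable] = coreA_measurable[OF h]
  have "(\<integral>\<^sup>+x. cutoff_jump x0 n k x \<partial>M) \<noteq> \<infinity>" using cut by simp
  have jump_measurable [measurable]: "cutoff_jump x0 n k \<in> borel_measurable M"
    by (rule nn_integral_measurable_M) measurable
  have weight: "ennreal (2 * (?\<chi> x)^2) \<le> ennreal (2 * exp (- ?I)) * ennreal (exp (V x))" for x
  proof (cases "?\<chi> x = 0")
    case False
    then have "dist x0 x < real n + real k" using cutoff_eq_zero[of k n x0 x, OF k] by linarith
    then have "?I \<le> V x" by (intro INF_le_V) simp
    then have "1 \<le> exp (- ?I) * exp (V x)" by (simp add: exp_add[symmetric])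
    moreover have "(?\<chi> x)^2 \<le> 1"
      using cutoff_nonneg[of x0 n k x] cutoff_le_one[of x0 n k x] by (simp add: power_le_one)
    ultimately have "2 * (?\<chi> x)^2 \<le> 2 * exp (- ?I) * exp (V x)" by linarith
    then show ?thesis by (simp add: ennreal_mult[symmetric])
  qed simp
  have "(\<integral>\<^sup>+x. Gam M q (\<lambda>x. h x * ?\<chi> x - m) x \<partial>M)
      \<le> (\<integral>\<^sup>+x. ennreal (2 * (?\<chi> x)^2) * Gam M q h x + ennreal (2 * c^2) * cutoff_jump x0 n k x \<partial>M)"
    unfolding Gam_diff_const by (intro nn_integral_mono Gam_mult_cutoff_le hb) measurable
  also have "\<dots> = (\<integral>\<^sup>+x. ennreal (2 * (?\<chi> x)^2) * Gam M q h x \<partial>M) + ennreal (2 * c^2) * ennreal t"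
    by (subst nn_integral_add) (auto simp: nn_integral_cmult cut)
  also have "(\<integral>\<^sup>+x. ennreal (2 * (?\<chi> x)^2) * Gam M q h x \<partial>M)
      \<le> (\<integral>\<^sup>+x. ennreal (2 * exp (- ?I)) * (ennreal (exp (V x)) * Gam M q h x) \<partial>M)"
    using weight by (intro nn_integral_mono) (simp add: mult.assoc[symmetric] mult_right_mono)
  also have "\<dots> = ennreal (2 * exp (- ?I)) * (\<integral>\<^sup>+x. Gam M q h x \<partial>MV)"
    by (simp add: nn_integral_cmult nn_integral_density)
  also have "\<dots> = ennreal (2 * exp (- ?I) * energy M q MV h)"
    using nn_integral_Gam_eq_energy[OF _ _ h, of MV] prob_space_MV
    by (simp add: prob_space_def ennreal_mult energy_nonneg)
  finally have "(\<integral>\<^sup>+x. Gam M q (\<lambda>x. h x * ?\<chi> x - m) x \<partial>M)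
      \<le> ennreal (2 * exp (- ?I) * energy M q MV h + 2 * c^2 * t)"
    using t energy_nonneg[of MV h] by (simp add: add_right_mono ennreal_plus ennreal_mult)
  then show ?thesis unfolding energy_def
    by (rule enn2real_leI[rotated]) (use t energy_nonneg[of MV h] in simp)
qed

definition admissible :: "real \<Rightarrow> nat \<Rightarrow> nat \<Rightarrow> bool" where
  "admissible r n k \<longleftrightarrow> n \<ge> 1 \<and> k \<ge> 1 \<and>
     ennreal (6 * measure MV {x. dist x0 x > real n})
     + ennreal (2 * exp (Zt x0 V n) * \<beta> (r / 8 * exp (- Zt x0 V n)))
       * (4 * etat M q x0 n k + gammat M q k
          + 4 * lam M q * ennreal (measure M {x. dist x0 x > real n - real k}))
     \<le> ennreal (r / 2)"

lemma betaV_set_eq: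
  "betaV_set M q x0 V \<beta> r = {2 * \<beta> (r / 8 * exp (- Zt x0 V n)) * exp (Kt x0 V n k) | n k. admissible r n k}"
  unfolding betaV_set_def admissible_def by simp

lemma admissible_error_le:
  assumes adm: "admissible r n k" and r: "r > 0"
  obtains t where "(\<integral>\<^sup>+x. cutoff_jump x0 n k x \<partial>M) = ennreal t" "t \<ge> 0"
    "2 * exp (Zt x0 V n) * \<beta> (r / 8 * exp (- Zt x0 V n)) * t + 4 * measure MV {x. dist x0 x > real n} \<le> r / 2"
proof -
  define a where "a = 2 * exp (Zt x0 V n) * \<beta> (r / 8 * exp (- Zt x0 V n))"
  define \<mu> where "\<mu> = measure MV {x. dist x0 x > real n}"
  define T where "T = (\<integral>\<^sup>+x. cutoff_jump x0 n k x \<partial>M)"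
  have a: "a > 0" unfolding a_def using r by (simp add: \<beta>_pos)
  have \<mu>: "\<mu> \<ge> 0" unfolding \<mu>_def by simp
  have k: "k \<ge> 1" using adm unfolding admissible_def by simp
  let ?far = "lam M q * ennreal (measure M {x. dist x0 x > real n - real k})"
  have "T \<le> gammat M q k + ?far"
    unfolding T_def by (rule nn_integral_cutoff_jump_le[OF k])
  also have "\<dots> \<le> 4 * etat M q x0 n k + gammat M q k + 4 * ?far"
    using mult_right_mono[of 1 4 ?far] by (intro add_mono add_increasing) auto
  finally have "ennreal a * T + ennreal (4 * \<mu>)
      \<le> ennreal (6 * \<mu>) + ennreal a * (4 * etat M q x0 n k + gammat M q k + 4 * ?far)"
    using \<mu> by (subst add.commute) (intro add_mono mult_left_mono ennreal_leI; simp)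
  also have "\<dots> \<le> ennreal (r / 2)"
    using adm unfolding admissible_def a_def \<mu>_def by (simp add: mult.assoc)
  finally have le: "ennreal a * T + ennreal (4 * \<mu>) \<le> ennreal (r / 2)" .
  have "T \<noteq> \<top>"
  proof
    assume "T = \<top>"
    then have "ennreal a * T = \<top>" using a by (simp add: ennreal_mult_eq_top_iff)
    then show False using le by (simp add: top_unique)
  qed
  then obtain t where t: "T = ennreal t" "t \<ge> 0" by (cases T) auto
  have "ennreal (a * t + 4 * \<mu>) \<le> ennreal (r / 2)"
    using le a t \<mu> by (simp add: ennreal_plus ennreal_mult)
  then have "a * t + 4 * \<mu> \<le> r / 2"
    using r by (simp add: ennreal_le_iff)
  then show ?thesis using that t unfolding T_def a_def \<mu>_def by blast
qed

lemma variance_MV_coreA_le: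
  assumes h: "h \<in> coreA M q" and hb: "\<And>x. \<bar>h x\<bar> \<le> c" and r: "r > 0"
    and adm: "admissible r n k"
  shows "(\<integral>x. (h x)^2 \<partial>MV) - (\<integral>x. h x \<partial>MV)^2 \<le>
    2 * \<beta> (r / 8 * exp (- Zt x0 V n)) * exp (Kt x0 V n k) * energy M q MV h + r * c^2"
proof -
  interpret M: prob_space M by (rule M_prob)
  note [measurable] = coreA_measurable[OF h]
  have n: "n \<ge> 1" and k: "k \<ge> 1" using adm unfolding admissible_def by simp_all
  define Z where "Z = Zt x0 V n"
  define s where "s = r / 8 * exp (- Z)"
  define I where "I = (INF x\<in>{x. dist x0 x \<le> real n + real k + 1}. V x)"
  define \<mu> where "\<mu> = measure MV {x. dist x0 x > real n}"
  define E where "E = energy M q MV h"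
  obtain t where cut: "(\<integral>\<^sup>+x. cutoff_jump x0 n k x \<partial>M) = ennreal t" and t: "t \<ge> 0"
    and err: "2 * exp Z * \<beta> s * t + 4 * \<mu> \<le> r / 2"
    using admissible_error_le[OF adm r] unfolding Z_def s_def \<mu>_def by blast
  have s: "s > 0" unfolding s_def using r by simp
  define m where "m = (\<integral>x. h x * cutoff x0 n k x \<partial>M)"
  have m: "\<bar>m\<bar> \<le> c"
    unfolding m_def using abs_mult_cutoff_le[OF hb] by (intro M.abs_integral_le_bound) auto
  define g where "g x = h x * cutoff x0 n k x - m" for x
  have g: "g \<in> coreA M q" unfolding g_def by (rule coreA_mult_cutoff_diff[OF h hb k m])
  have gb: "\<bar>g x\<bar> \<le> 2 * c" for x
    unfolding g_def using abs_mult_cutoff_le[OF hb[of x], of x0 n k x] m by linarith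
  have "integrable M (\<lambda>x. h x * cutoff x0 n k x)"
    by (rule M.integrable_bounded[OF _ abs_mult_cutoff_le[OF hb]]) measurable
  then have "(\<integral>x. g x \<partial>M) = 0"
    unfolding g_def m_def using M.prob_space by simp
  then have W: "(\<integral>x. (g x)^2 \<partial>M) \<le> \<beta> s * energy M q M g + s * (2 * c)^2"
    by (rule weak_poincare_coreA[OF g gb _ s])
  have EG: "energy M q M g \<le> 2 * exp (- I) * E + 2 * c^2 * t"
    unfolding g_def I_def E_def by (rule energy_mult_cutoff_le[OF h hb n k cut t])
  have VS: "(\<integral>x. (h x)^2 \<partial>MV) - (\<integral>x. h x \<partial>MV)^2 \<le> exp Z * (\<integral>x. (g x)^2 \<partial>M) + 4 * c^2 * \<mu>"
    unfolding Z_def g_def \<mu>_def by (rule variance_MV_le_localized[OF _ hb m n k]) measurable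
  have "exp Z * (\<integral>x. (g x)^2 \<partial>M) \<le> exp Z * (\<beta> s * (2 * exp (- I) * E + 2 * c^2 * t) + s * (2 * c)^2)"
    using W EG \<beta>_pos[OF s] by (intro mult_left_mono) (auto intro: order_trans mult_left_mono)
  also have "\<dots> = 2 * \<beta> s * (exp Z * exp (- I)) * E + c^2 * (2 * exp Z * \<beta> s * t) + (exp Z * s) * 4 * c^2"
    by (simp add: algebra_simps power2_eq_square)
  also have "exp Z * s = r / 8" unfolding s_def by (simp add: exp_minus field_simps)
  also have "exp Z * exp (- I) = exp (Kt x0 V n k)"
    unfolding Kt_def Z_def I_def by (simp add: exp_diff exp_minus field_simps)
  finally have "exp Z * (\<integral>x. (g x)^2 \<partial>M)
      \<le> 2 * \<beta> s * exp (Kt x0 V n k) * E + c^2 * (2 * exp Z * \<beta> s * t) + r / 8 * 4 * c^2" .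
  moreover have "c^2 * (2 * exp Z * \<beta> s * t) + 4 * c^2 * \<mu> \<le> c^2 * (r / 2)"
    using mult_left_mono[OF err, of "c^2"] by (simp add: algebra_simps)
  ultimately show ?thesis
    using VS unfolding s_def Z_def E_def by (simp add: field_simps)
qed

lemma approx_seq_clip_L2:
  assumes ap: "approx_seq M q MV f fs" and fb: "\<And>x. \<bar>f x\<bar> \<le> c"
  shows "(\<lambda>i. \<integral>x. (clip c (fs i x) - f x)^2 \<partial>MV) \<longlonglongrightarrow> 0"
proof (rule real_tendsto_sandwich[OF _ _ tendsto_const])
  interpret MV: prob_space MV by (rule prob_space_MV)
  have [measurable]: "f \<in> borel_measurable M" and fs: "\<And>i. fs i \<in> coreA M q"
    and L2: "(\<lambda>i. \<integral>x. (fs i x - f x)^2 \<partial>MV) \<longlonglongrightarrow> 0"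
    using ap unfolding approx_seq_def by auto
  show "(\<lambda>i. \<integral>x. (fs i x - f x)^2 \<partial>MV) \<longlonglongrightarrow> 0" by (rule L2)
  show "\<forall>\<^sub>F i in sequentially. 0 \<le> (\<integral>x. (clip c (fs i x) - f x)^2 \<partial>MV)" by simp
  show "\<forall>\<^sub>F i in sequentially. (\<integral>x. (clip c (fs i x) - f x)^2 \<partial>MV) \<le> (\<integral>x. (fs i x - f x)^2 \<partial>MV)"
  proof (intro always_eventually allI integral_mono')
    fix i
    note [measurable] = coreA_measurable[OF fs[of i]]
    obtain B where B: "\<And>x. \<bar>fs i x\<bar> \<le> B" using coreA_bounded[OF fs[of i]] by metis
    have "\<bar>fs i x - f x\<bar> \<le> B + c" for x
      using abs_triangle_ineq4[of "fs i x" "f x"] B[of x] fb[of x] by linarith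
    then show "integrable MV (\<lambda>x. (fs i x - f x)^2)"
      by (intro MV.integrable_square_bounded) auto
    fix x
    have "\<bar>clip c (fs i x) - f x\<bar> \<le> \<bar>fs i x - f x\<bar>"
      using abs_clip_diff_le[of c "fs i x" "f x"] clip_eq_self[OF fb[of x]] by simp
    then show "(clip c (fs i x) - f x)^2 \<le> (fs i x - f x)^2"
      by (metis abs_ge_zero power2_abs power_mono)
  qed simp
qed

text \<open>Clipping at the uniform norm of f keeps the approximants in the core, does not increase
  their energies, and still approximates f in L^2, so the bound for core functions passes to the limit.\<close>
lemma weak_poincare_MV_bound:
  assumes r: "r > 0" and b: "b \<in> betaV_set M q x0 V \<beta> r"
    and ap: "approx_seq M q MV f fs" and e: "(\<lambda>i. energy M q MV (fs i)) \<longlonglongrightarrow> e"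
    and fb: "bounded (range f)" and f0: "(\<integral>x. f x \<partial>MV) = 0"
  shows "(\<integral>x. (f x)^2 \<partial>MV) \<le> b * e + r * (sup_norm f)^2"
proof -
  interpret MV: prob_space MV by (rule prob_space_MV)
  obtain n k where adm: "admissible r n k"
    and b_eq: "b = 2 * \<beta> (r / 8 * exp (- Zt x0 V n)) * exp (Kt x0 V n k)"
    using b unfolding betaV_set_eq by blast
  have b0: "b \<ge> 0" unfolding b_eq using \<beta>_pos[of "r / 8 * exp (- Zt x0 V n)"] r by simp
  define c where "c = sup_norm f"
  have fc: "\<bar>f x\<bar> \<le> c" for x unfolding c_def by (rule abs_le_sup_norm[OF fb])
  have c: "c \<ge> 0" using fc[of undefined] by linarith
  have fs: "fs i \<in> coreA M q" for i using ap unfolding approx_seq_def by auto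
  have [measurable]: "f \<in> borel_measurable M" using ap unfolding approx_seq_def by auto
  define h where "h i x = clip c (fs i x)" for i x
  have h: "h i \<in> coreA M q" for i unfolding h_def by (rule coreA_clip[OF fs c])
  have hc: "\<bar>h i x\<bar> \<le> c" for i x unfolding h_def by (rule abs_clip_le[OF c])
  have le: "(\<integral>x. (h i x)^2 \<partial>MV) - (\<integral>x. h i x \<partial>MV)^2 \<le> b * energy M q MV (fs i) + r * c^2" for i
  proof -
    have "(\<integral>x. (h i x)^2 \<partial>MV) - (\<integral>x. h i x \<partial>MV)^2 \<le> b * energy M q MV (h i) + r * c^2"
      unfolding b_eq by (rule variance_MV_coreA_le[OF h hc r adm])
    also have "\<dots> \<le> b * energy M q MV (fs i) + r * c^2"
      using energy_clip_le[OF _ _ fs, of MV c i] prob_space_MV b0 unfolding h_def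
      by (intro add_right_mono mult_left_mono) (auto simp: prob_space_def)
    finally show ?thesis .
  qed
  have L2: "(\<lambda>i. \<integral>x. (h i x - f x)^2 \<partial>MV) \<longlonglongrightarrow> 0"
    unfolding h_def by (rule approx_seq_clip_L2[OF ap fc])
  have "(\<lambda>i. (\<integral>x. (h i x)^2 \<partial>MV) - (\<integral>x. h i x \<partial>MV)^2) \<longlonglongrightarrow> (\<integral>x. (f x)^2 \<partial>MV) - (\<integral>x. f x \<partial>MV)^2"
    using MV.moments_tendsto_of_L2[OF _ _ hc fc L2] coreA_measurable[OF h]
    by (intro tendsto_intros) auto
  moreover have "(\<lambda>i. b * energy M q MV (fs i) + r * c^2) \<longlonglongrightarrow> b * e + r * c^2"
    using e by (intro tendsto_intros)
  ultimately have "(\<integral>x. (f x)^2 \<partial>MV) - (\<integral>x. f x \<partial>MV)^2 \<le> b * e + r * c^2"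
    using le by (intro LIMSEQ_le) auto
  then show ?thesis using f0 unfolding c_def by simp
qed

lemma weak_poincare_MV:
  assumes ne: "\<And>r. r > 0 \<Longrightarrow> betaV_set M q x0 V \<beta> r \<noteq> {}"
  shows "weak_poincare M q MV (betaV M q x0 V \<beta>)"
  unfolding weak_poincare_def
proof (intro allI impI ballI)
  fix r :: real and f assume r: "r > 0" and fd: "f \<in> form_dom M q MV"
    and fb: "bounded (range f)" and f0: "(\<integral>x. f x \<partial>MV) = 0"
  have MV_fin: "finite_measure MV" using prob_space_MV by (simp add: prob_space_def)
  define S where "S = {e. \<exists>fs. approx_seq M q MV f fs \<and> (\<lambda>i. energy M q MV (fs i)) \<longlonglongrightarrow> e}"
  define F where "F = form_val M q MV f"
  have F_eq: "F = Inf S" unfolding F_def S_def form_val_def ..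
  have S_ne: "S \<noteq> {}"
    using fd approx_seq_convergent_energy[OF _ MV_fin] unfolding S_def form_dom_def by fastforce
  have S_nonneg: "e \<ge> 0" if "e \<in> S" for e
    using that energy_limit_nonneg unfolding S_def by blast
  have F0: "F \<ge> 0" unfolding F_eq by (rule cInf_greatest[OF S_ne S_nonneg])
  let ?R = "(\<integral>x. (f x)^2 \<partial>MV) - r * (sup_norm f)^2"
  have R_le: "?R \<le> b * F" if b: "b \<in> betaV_set M q x0 V \<beta> r" for b
  proof -
    have bp: "b > 0" using b r \<beta>_pos unfolding betaV_set_eq by auto
    have "?R / b \<le> e" if "e \<in> S" for e
    proof -
      obtain fs where "approx_seq M q MV f fs" "(\<lambda>i. energy M q MV (fs i)) \<longlonglongrightarrow> e"
        using \<open>e \<in> S\<close> unfolding S_def by blast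
      from weak_poincare_MV_bound[OF r b this fb f0] have "?R \<le> b * e" by simp
      then show ?thesis using bp by (simp add: divide_le_eq mult.commute)
    qed
    then have "?R / b \<le> F" unfolding F_eq by (intro cInf_greatest[OF S_ne])
    then show ?thesis using bp by (simp add: divide_le_eq mult.commute)
  qed
  have "?R \<le> betaV M q x0 V \<beta> r * F"
  proof (cases "F = 0")
    case True
    obtain b where "b \<in> betaV_set M q x0 V \<beta> r" using ne[OF r] by auto
    then show ?thesis using R_le True by force
  next
    case False
    with F0 have "F > 0" by simp
    then have "?R / F \<le> betaV M q x0 V \<beta> r"
      unfolding betaV_def using R_le by (intro cInf_greatest[OF ne[OF r]]) (simp add: divide_le_eq)
    then show ?thesis using \<open>F > 0\<close> by (simp add: divide_le_eq)
  qed
  then show "(\<integral>x. (f x)^2 \<partial>MV) \<le> betaV M q x0 V \<beta> r * form_val M q MV f + r * (sup_norm f)^2"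
    unfolding F_def by simp
qed

lemma exp_Zt_mult_\<beta>_mono:
  assumes "n \<ge> 1" "\<epsilon> > 0"
  shows "exp (Zt x0 V 1) * \<beta> (\<epsilon> * exp (- Zt x0 V 1)) \<le> exp (Zt x0 V n) * \<beta> (\<epsilon> * exp (- Zt x0 V n))"
  using Zt_mono[OF assms(1)] assms(2) \<beta>_pos[of "\<epsilon> * exp (- Zt x0 V 1)"]
  by (intro mult_mono \<beta>_decr) auto

lemma measure_MV_tail_le:
  assumes "exp t * measure M {x. dist x0 x > real n - real k} \<le> \<epsilon>"
    and "measure MV {x. V x > t} < \<epsilon>"
  shows "measure MV {x. dist x0 x > real n} \<le> 2 * \<epsilon>"
proof -
  interpret M: prob_space M by (rule M_prob)
  have sets: "{x. dist x0 x > real n} \<in> sets M" "{x. dist x0 x > real n - real k} \<in> sets M"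
    by (intro Collect_in_sets_M; measurable)+
  have "measure M {x. dist x0 x > real n} \<le> measure M {x. dist x0 x > real n - real k}"
    by (rule M.finite_measure_mono[OF _ sets(2)]) auto
  then have "exp t * measure M {x. dist x0 x > real n} \<le> \<epsilon>"
    using assms(1) by (meson exp_ge_zero mult_left_mono order_trans)
  then show ?thesis using measure_MV_le[OF sets(1), of t] assms(2) by linarith
qed

lemma admissible_if_small:
  fixes r L t :: real and n k :: nat
  defines "a \<equiv> exp (Zt x0 V n) * \<beta> (r / 8 * exp (- Zt x0 V n))"
    and "c \<equiv> exp (Zt x0 V 1) * \<beta> (r / 8 * exp (- Zt x0 V 1))"
    and "\<mu> \<equiv> measure M {x. dist x0 x > real n - real k}"
  assumes r: "r > 0" and n: "n \<ge> 1" and k: "k \<ge> 1"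
    and L: "L \<ge> 0" "lam M q = ennreal L"
    and tail: "measure MV {x. V x > t} < r / 48"
    and small: "ennreal a * (etat M q x0 n k + gammat M q k + ennreal \<mu>)
      \<le> ennreal (min (c * (r / 48) / exp t) (r / (32 * (L + 1))))"
  shows "admissible r n k"
proof -
  let ?S = "etat M q x0 n k + gammat M q k + ennreal \<mu>"
  have c: "c > 0" unfolding c_def using r \<beta>_pos by simp
  have ca: "c \<le> a" unfolding a_def c_def using n r by (intro exp_Zt_mult_\<beta>_mono) auto
  have \<mu>: "\<mu> \<ge> 0" unfolding \<mu>_def by simp
  have "ennreal (c * \<mu>) \<le> ennreal a * ?S"
    using ca c \<mu> by (simp add: ennreal_mult) (intro mult_mono ennreal_leI; simp)
  also note small
  finally have "c * \<mu> \<le> min (c * (r / 48) / exp t) (r / (32 * (L + 1)))"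
    using r c L(1) by (subst (asm) ennreal_le_iff) auto
  then have "c * \<mu> * exp t \<le> c * (r / 48)" by (simp add: pos_le_divide_eq)
  then have "c * (exp t * \<mu>) \<le> c * (r / 48)" by (simp add: mult_ac)
  then have "exp t * \<mu> \<le> r / 48" using c by simp
  then have "6 * measure MV {x. dist x0 x > real n} \<le> r / 4"
    using measure_MV_tail_le[of t n k "r / 48"] tail unfolding \<mu>_def by simp
  then have tailMV: "ennreal (6 * measure MV {x. dist x0 x > real n}) \<le> ennreal (r / 4)"
    by (rule ennreal_leI)
  have "ennreal (2 * a) * (4 * etat M q x0 n k + gammat M q k + 4 * lam M q * ennreal \<mu>)
      \<le> ennreal (2 * a) * (ennreal (4 * (L + 1)) * ?S)"
    unfolding L(2) by (intro mult_left_mono ennreal_combination_le L(1)) simp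
  also have "\<dots> = (ennreal (2 * a) * ennreal (4 * (L + 1))) * ?S"
    by (simp add: mult.assoc)
  also have "ennreal (2 * a) * ennreal (4 * (L + 1)) = ennreal (8 * (L + 1)) * ennreal a"
  proof -
    have "ennreal (2 * a) * ennreal (4 * (L + 1)) = ennreal (2 * a * (4 * (L + 1)))"
      using ca c L(1) by (intro ennreal_mult[symmetric]) auto
    also have "2 * a * (4 * (L + 1)) = 8 * (L + 1) * a" by simp
    also have "ennreal (8 * (L + 1) * a) = ennreal (8 * (L + 1)) * ennreal a"
      using ca c L(1) by (intro ennreal_mult) auto
    finally show ?thesis .
  qed
  also have "ennreal (8 * (L + 1)) * ennreal a * ?S \<le> ennreal (8 * (L + 1)) * ennreal (r / (32 * (L + 1)))"
  proof -
    have "ennreal a * ?S \<le> ennreal (r / (32 * (L + 1)))"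
      using small by (rule order_trans) (intro ennreal_leI min.cobounded2)
    then show ?thesis by (simp add: mult.assoc mult_left_mono)
  qed
  also have "\<dots> = ennreal (8 * (L + 1) * (r / (32 * (L + 1))))"
    using L(1) r by (intro ennreal_mult[symmetric]) auto
  also have "8 * (L + 1) * (r / (32 * (L + 1))) = r / 4"
    using L(1) by (simp add: field_simps)
  finally have "ennreal (6 * measure MV {x. dist x0 x > real n})
      + ennreal (2 * a) * (4 * etat M q x0 n k + gammat M q k + 4 * lam M q * ennreal \<mu>)
      \<le> ennreal (r / 4) + ennreal (r / 4)"
    using tailMV by (intro add_mono)
  also have "\<dots> = ennreal (r / 2)" using r by (simp flip: ennreal_plus)
  finally have le: "ennreal (6 * measure MV {x. dist x0 x > real n})
      + ennreal (2 * a) * (4 * etat M q x0 n k + gammat M q k + 4 * lam M q * ennreal \<mu>)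
      \<le> ennreal (r / 2)" .
  then show ?thesis
    unfolding admissible_def using n k unfolding a_def \<mu>_def by (simp add: mult.assoc)
qed

lemma betaV_set_nonempty:
  assumes r: "r > 0"
    and inf_zero: "(INF nk\<in>{(n, k). n \<ge> (1::nat) \<and> k \<ge> (1::nat)}.
          ennreal (exp (Zt x0 V (fst nk)) * \<beta> (r / 8 * exp (- Zt x0 V (fst nk))))
          * (etat M q x0 (fst nk) (snd nk) + gammat M q (snd nk)
             + ennreal (measure M {x. dist x0 x > real (fst nk) - real (snd nk)}))) = 0"
  shows "betaV_set M q x0 V \<beta> r \<noteq> {}"
proof -
  obtain L where L: "L \<ge> 0" "lam M q = ennreal L" using lam_eq_ennreal by metis
  obtain t where t: "measure MV {x. V x > t} < r / 48"
    using measure_MV_V_gt_small[of "r / 48"] r by auto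
  define c where "c = exp (Zt x0 V 1) * \<beta> (r / 8 * exp (- Zt x0 V 1))"
  define \<delta> where "\<delta> = min (c * (r / 48) / exp t) (r / (32 * (L + 1)))"
  let ?F = "\<lambda>nk. ennreal (exp (Zt x0 V (fst nk)) * \<beta> (r / 8 * exp (- Zt x0 V (fst nk))))
          * (etat M q x0 (fst nk) (snd nk) + gammat M q (snd nk)
             + ennreal (measure M {x. dist x0 x > real (fst nk) - real (snd nk)}))"
  have "\<delta> > 0" unfolding \<delta>_def c_def using r L \<beta>_pos by simp
  then have "(INF nk\<in>{(n, k). n \<ge> (1::nat) \<and> k \<ge> (1::nat)}. ?F nk) < ennreal \<delta>"
    using inf_zero by simp
  then obtain nk where "nk \<in> {(n, k). n \<ge> (1::nat) \<and> k \<ge> (1::nat)}" "?F nk < ennreal \<delta>"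
    by (auto simp: INF_less_iff)
  then obtain n k where nk: "n \<ge> 1" "k \<ge> 1" and "?F (n, k) < ennreal \<delta>"
    by (cases nk) auto
  then have "admissible r n k"
    unfolding \<delta>_def c_def by (intro admissible_if_small[OF r nk L t]) simp
  then show ?thesis unfolding betaV_set_eq by blast
qed

end

theorem theorem3p1:
  fixes M :: "'a::polish_space measure"
    and q :: "'a \<Rightarrow> 'a \<Rightarrow> real"
    and x0 :: 'a
    and V :: "'a \<Rightarrow> real"
    and \<beta> :: "real \<Rightarrow> real"
  assumes M_borel: "sets M = sets borel"
    and M_prob: "prob_space M"
    and q_meas: "(\<lambda>(x, y). q x y) \<in> borel_measurable (M \<Otimes>\<^sub>M M)"
    and q_nonneg: "\<And>x y. q x y \<ge> 0"
    and q_diag: "\<And>x. q x x = 0"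
    and lam_fin: "lam M q < \<infinity>"
    and A_dense: "\<And>f e. f \<in> borel_measurable M \<Longrightarrow> integrable M (\<lambda>x. (f x)^2) \<Longrightarrow> e > 0 \<Longrightarrow>
                    \<exists>g\<in>coreA M q. (\<integral>x. (f x - g x)^2 \<partial>M) < e"
    and V_meas: "V \<in> borel_measurable M"
    and V_loc_bdd: "\<And>r. r > 0 \<Longrightarrow> \<exists>C. \<forall>x. dist x0 x \<le> r \<longrightarrow> \<bar>V x\<bar> \<le> C"
    and V_norm: "(\<integral>\<^sup>+ x. ennreal (exp (V x)) \<partial>M) = 1"
    and \<beta>_pos: "\<And>r. r > 0 \<Longrightarrow> \<beta> r > 0"
    and \<beta>_decr: "\<And>s t. 0 < s \<Longrightarrow> s \<le> t \<Longrightarrow> \<beta> t \<le> \<beta> s"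
    and WPI: "weak_poincare M q M \<beta>"
    and inf_cond: "\<And>\<epsilon>. \<epsilon> > 0 \<Longrightarrow>
       (INF nk\<in>{(n, k). n \<ge> (1::nat) \<and> k \<ge> (1::nat)}.
          ennreal (exp (Zt x0 V (fst nk)) * \<beta> (\<epsilon> * exp (- Zt x0 V (fst nk))))
          * (etat M q x0 (fst nk) (snd nk) + gammat M q (snd nk)
             + ennreal (measure M {x. dist x0 x > real (fst nk) - real (snd nk)}))) = 0"
  shows "weak_poincare M q (density M (\<lambda>x. ennreal (exp (V x)))) (betaV M q x0 V \<beta>)
         \<and> (\<forall>r>0. betaV_set M q x0 V \<beta> r \<noteq> {})"
proof -
  interpret weighted_jump_kernel M q x0 V \<beta>
    by (intro weighted_jump_kernel.intro jump_kernel.intro weighted_jump_kernel_axioms.intro) (fact assms)+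
  have "betaV_set M q x0 V \<beta> r \<noteq> {}" if "r > 0" for r
    using that inf_cond[of "r / 8"] by (intro betaV_set_nonempty) auto
  then show ?thesis using weak_poincare_MV by blast
qed

end
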